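(* Let $X\in\mathbf{R}^{n\times p}$ with rows $x_1,\dots,x_n\in\mathbf{R}^p$, let $P=\operatorname{conv}\{x_1,\dots,x_n\}$, and let $h_1,\dots,h_k$ be the extreme points of $P$. For each $i$ let $\omega_i=\Pr(z\in N_P(h_i))$, $z\sim\mathcal{N}(0,I_p)$. Consider the proto-algorithm: generate a $p\times m$ random matrix $G$ with independent standard normal entries, form $XG$, let $I_{\max}$ and $I_{\min}$ be the sets of row indices attaining the maximum and minimum in each column of $XG$, and return the rows of $X$ indexed by $I_{\max}\cup I_{\min}$. Let $\delta\in(0,1)$ and $$\bar{\kappa}=\frac{1}{k\log\left(\frac{1}{\max_i(1-2\omega_i)}\right)}.$$ If $m>\bar{\kappa}\,k\log\left(\frac{k}{\delta}\right)$, then with probability at least $1-\delta$ the returned rows include all $k$ extreme points of $P$.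
   Context: For a convex set $C\subset\mathbf{R}^p$ and $x\in C$, the normal cone is $N_C(x)=\{w\in\mathbf{R}^p : w^T(y-x)\le 0\text{ for all }y\in C\}$. The solid angle of a cone $K\subset\mathbf{R}^p$ is $\Pr(z\in K)$ for $z\sim\mathcal{N}(0,I_p)$. *)

theory Defs
  imports "HOL-Analysis.Analysis" "HOL-Probability.Probability"
begin

definition normal_cone :: "('a::euclidean_space) set \<Rightarrow> 'a \<Rightarrow> 'a set" where
  "normal_cone C x = {w. \<forall>y\<in>C. inner w (y - x) \<le> 0}"

definition std_normal_measure :: "real measure" where
  "std_normal_measure = density lborel std_normal_density"

definition std_gaussian :: "(real ^ 'p::finite) measure" where
  "std_gaussian = distr (PiM UNIV (\<lambda>_::'p. std_normal_measure)) borel (\<lambda>z. \<chi> i. z i)"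

definition solid_angle :: "(real ^ 'p::finite) set \<Rightarrow> real" where
  "solid_angle K = measure std_gaussian K"

text \<open>Law of a p x m random matrix G with independent standard normal entries;
  G is represented as the function (i,j) \<mapsto> G_ij, i::'p, j < m.\<close>
definition gaussian_matrix :: "nat \<Rightarrow> (('p::finite \<times> nat) \<Rightarrow> real) measure" where
  "gaussian_matrix m = PiM (UNIV \<times> {..<m}) (\<lambda>_. std_normal_measure)"

definition gcol :: "(('p::finite \<times> nat) \<Rightarrow> real) \<Rightarrow> nat \<Rightarrow> real ^ 'p" where
  "gcol G j = (\<chi> i. G (i, j))"

text \<open>Entry (r,j) of XG, where the rows of X are x 0, ..., x (n-1).\<close>
definition XG_entry :: "(nat \<Rightarrow> real ^ 'p::finite) \<Rightarrow> (('p \<times> nat) \<Rightarrow> real) \<Rightarrow> nat \<Rightarrow> nat \<Rightarrow> real" where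
  "XG_entry x G r j = inner (x r) (gcol G j)"

definition I_max :: "nat \<Rightarrow> nat \<Rightarrow> (nat \<Rightarrow> real ^ 'p::finite) \<Rightarrow> (('p \<times> nat) \<Rightarrow> real) \<Rightarrow> nat set" where
  "I_max n m x G = {r. r < n \<and> (\<exists>j<m. \<forall>s<n. XG_entry x G s j \<le> XG_entry x G r j)}"

definition I_min :: "nat \<Rightarrow> nat \<Rightarrow> (nat \<Rightarrow> real ^ 'p::finite) \<Rightarrow> (('p \<times> nat) \<Rightarrow> real) \<Rightarrow> nat set" where
  "I_min n m x G = {r. r < n \<and> (\<exists>j<m. \<forall>s<n. XG_entry x G r j \<le> XG_entry x G s j)}"

definition returned_rows :: "nat \<Rightarrow> nat \<Rightarrow> (nat \<Rightarrow> real ^ 'p::finite) \<Rightarrow> (('p \<times> nat) \<Rightarrow> real) \<Rightarrow> (real ^ 'p) set" where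
  "returned_rows n m x G = x ` (I_max n m x G \<union> I_min n m x G)"

end

theory Submission
  imports Defs
begin

text \<open>A vertex h of P is missed only if no column g of G lies in N_P(h) \<union> -N_P(h): a column in
  N_P(h) makes row h maximal in the corresponding column of XG, a column in -N_P(h) makes it minimal.
  The two cones meet only in a hyperplane, a Gaussian null set, so by symmetry of the Gaussian a
  column avoids their union with probability 1 - 2\<omega>_h \<le> \<mu>. The columns are independent, hence h is
  missed with probability at most \<mu>^m, and a union bound over the k vertices bounds the failure
  probability by k \<mu>^m < \<delta>. That \<mu> < 1 comes from the normal cone at a vertex having interior.\<close>

lemma prob_space_std_normal_measure: "prob_space std_normal_measure"
  unfolding std_normal_measure_def by (rule prob_space_normal_density) simp

lemma sets_std_normal_measure [measurable_cong]: "sets std_normal_measure = sets borel"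
  unfolding std_normal_measure_def by simp

lemma space_std_normal_measure [simp]: "space std_normal_measure = UNIV"
  unfolding std_normal_measure_def by simp

lemma distr_uminus_std_normal_measure:
  "distr std_normal_measure std_normal_measure uminus = std_normal_measure"
proof -
  have "distr std_normal_measure std_normal_measure uminus
      = distr (density (distr lborel borel uminus) std_normal_density) lborel uminus"
    unfolding std_normal_measure_def lborel_distr_uminus by (rule distr_cong) auto
  also have "\<dots> = density lborel (\<lambda>x. std_normal_density (- x))"
    using distr_density_distr[of uminus lborel borel uminus "\<lambda>x. ennreal (std_normal_density x)"] by (simp add: comp_def)
  also have "\<dots> = std_normal_measure"
    by (simp add: normal_density_def std_normal_measure_def)
  finally show ?thesis .
qed

lemma null_sets_std_normal_measure: "null_sets std_normal_measure = null_sets lborel"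
proof -
  have "std_normal_density x \<noteq> 0" for x
    by (simp add: normal_density_def)
  then have "A \<in> null_sets std_normal_measure \<longleftrightarrow> A \<in> null_sets lborel" for A
    unfolding std_normal_measure_def
    by (subst null_sets_density_iff) (auto simp: AE_iff_null_sets AE_not_in)
  then show ?thesis by blast
qed

lemma borel_measurable_vec_lambda:
  fixes f :: "'a \<Rightarrow> 'i::finite \<Rightarrow> real"
  assumes "\<And>i. (\<lambda>\<omega>. f \<omega> i) \<in> borel_measurable M"
  shows "(\<lambda>\<omega>. \<chi> i. f \<omega> i) \<in> borel_measurable M"
  using assms by (subst borel_measurable_euclidean_space) (auto simp: Basis_vec_def inner_axis)

abbreviation std_normal_PiM :: "('p::finite \<Rightarrow> real) measure" where
  "std_normal_PiM \<equiv> PiM UNIV (\<lambda>_. std_normal_measure)"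

lemma measurable_vec_lambda_std_normal_PiM [measurable]:
  "(\<lambda>z. \<chi> i. z i) \<in> measurable (std_normal_PiM :: ('p::finite \<Rightarrow> real) measure) borel"
  by (rule borel_measurable_vec_lambda) measurable

lemma sets_std_gaussian [measurable_cong]: "sets std_gaussian = sets borel"
  by (simp add: std_gaussian_def)

lemma space_std_gaussian [simp]: "space std_gaussian = UNIV"
  by (simp add: std_gaussian_def)

lemma prob_space_std_gaussian: "prob_space std_gaussian"
  unfolding std_gaussian_def
  by (intro prob_space.prob_space_distr prob_space_PiM prob_space_std_normal_measure) measurable

lemma distr_uminus_std_gaussian:
  "distr std_gaussian borel uminus = (std_gaussian :: (real ^ 'p::finite) measure)"
proof -
  have [measurable]: "compose UNIV uminus \<in> measurable std_normal_PiM (std_normal_PiM :: ('p \<Rightarrow> real) measure)"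
    unfolding compose_def by measurable
  have "distr std_normal_PiM std_normal_PiM (compose UNIV uminus) = (std_normal_PiM :: ('p \<Rightarrow> real) measure)"
    using distr_PiM_finite_prob_space'[of "UNIV :: 'p set" "\<lambda>_. std_normal_measure" "\<lambda>_. std_normal_measure" uminus]
    by (simp add: prob_space_std_normal_measure distr_uminus_std_normal_measure)
  moreover have "distr std_gaussian borel uminus
      = distr (distr std_normal_PiM std_normal_PiM (compose UNIV uminus)) borel (\<lambda>z. \<chi> i::'p. z i)"
    unfolding std_gaussian_def
    by (subst (1 2) distr_distr) (auto intro!: distr_cong simp: compose_def vec_eq_iff)
  ultimately show ?thesis
    by (simp add: std_gaussian_def)
qed

lemma measure_std_gaussian_vimage_uminus:
  assumes "A \<in> sets borel"
  shows "measure std_gaussian (uminus -` A) = measure (std_gaussian :: (real ^ 'p::finite) measure) A"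
proof -
  have "measure (distr std_gaussian borel uminus) A = measure (std_gaussian :: (real ^ 'p) measure) (uminus -` A)"
    using assms by (simp add: measure_distr)
  then show ?thesis
    by (simp add: distr_uminus_std_gaussian)
qed

text \<open>Fubini in a coordinate i0 with v $ i0 \<noteq> 0: every slice of the hyperplane is a single point.\<close>

lemma null_sets_std_gaussian_hyperplane:
  fixes v :: "real ^ 'p::finite"
  assumes "v \<noteq> 0"
  shows "{w. w \<bullet> v = 0} \<in> null_sets std_gaussian"
proof -
  obtain i0 where i0: "v $ i0 \<noteq> 0"
    using assms by (auto simp: vec_eq_iff)
  define J where "J = UNIV - {i0}"
  define S where "S = {z \<in> space std_normal_PiM. (\<Sum>i\<in>UNIV. z i * v $ i) = 0}"
  let ?N = std_normal_measure
  let ?NJ = "?N \<Otimes>\<^sub>M PiM J (\<lambda>_. ?N)"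
  let ?f = "\<lambda>(t, y). y(i0 := t)"
  define A where "A = ?f -` S \<inter> space ?NJ"
  interpret pair_prob_space ?N "PiM J (\<lambda>_. ?N)"
    by (simp add: pair_prob_space_def pair_sigma_finite_def prob_space_imp_sigma_finite
        prob_space_PiM prob_space_std_normal_measure)
  have UNIV_eq: "insert i0 J = UNIV"
    by (auto simp: J_def)
  have f [measurable]: "?f \<in> measurable ?NJ std_normal_PiM"
    using measurable_add_dim[of i0 J "\<lambda>_. ?N"] by (simp add: UNIV_eq)
  have S [measurable]: "S \<in> sets std_normal_PiM"
    unfolding S_def by measurable
  have "emeasure std_gaussian {w. w \<bullet> v = 0} = emeasure std_normal_PiM S"
    unfolding std_gaussian_def
    by (subst emeasure_distr) (auto simp: S_def inner_vec_def intro!: arg_cong[where f = "emeasure _"])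
  also have "\<dots> = emeasure (distr ?NJ std_normal_PiM ?f) S"
    using distr_pair_PiM_eq_PiM[of J "\<lambda>_. ?N" i0] by (simp add: prob_space_std_normal_measure UNIV_eq J_def)
  also have "\<dots> = emeasure ?NJ A"
    unfolding A_def by (rule emeasure_distr) simp_all
  also have "\<dots> = (\<integral>\<^sup>+y. emeasure ?N ((\<lambda>t. (t, y)) -` A) \<partial>PiM J (\<lambda>_. ?N))"
    by (rule emeasure_pair_measure_alt2) (simp add: A_def)
  also have "\<dots> = 0"
  proof (intro nn_integral_zero' AE_I2)
    fix y
    have "(\<lambda>t. (t, y)) -` A \<subseteq> {- (\<Sum>i\<in>J. y i * v $ i) / v $ i0}"
    proof
      fix t assume "t \<in> (\<lambda>t. (t, y)) -` A"
      then have "(\<Sum>i\<in>insert i0 J. (y(i0 := t)) i * v $ i) = 0"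
        by (simp add: A_def S_def UNIV_eq)
      then have "t * v $ i0 + (\<Sum>i\<in>J. y i * v $ i) = 0"
        by (subst (asm) sum.insert) (auto simp: J_def intro!: sum.cong)
      with i0 show "t \<in> {- (\<Sum>i\<in>J. y i * v $ i) / v $ i0}"
        by (simp add: field_simps)
    qed
    moreover have "{- (\<Sum>i\<in>J. y i * v $ i) / v $ i0} \<in> null_sets ?N"
      by (simp add: null_sets_std_normal_measure finite_imp_null_set_lborel)
    ultimately show "emeasure ?N ((\<lambda>t. (t, y)) -` A) = 0"
      by (meson emeasure_eq_0 null_setsD1 null_setsD2)
  qed
  finally show ?thesis
    using closed_hyperplane[of v 0] by (simp add: null_sets_def sets_std_gaussian borel_closed inner_commute)
qed

lemma emeasure_std_gaussian_ball_pos: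
  fixes c :: "real ^ 'p::finite"
  assumes "r > 0"
  shows "emeasure std_gaussian (ball c r) > 0"
proof -
  define e where "e = r / CARD('p)"
  define B where "B = PiE UNIV (\<lambda>i. {c $ i - e <..< c $ i + e})"
  have e: "e > 0"
    using assms by (simp add: e_def)
  have "B \<subseteq> (\<lambda>z. \<chi> i. z i) -` ball c r"
  proof
    fix z assume z: "z \<in> B"
    have "dist c (\<chi> i. z i) \<le> (\<Sum>i\<in>UNIV. \<bar>(c - (\<chi> i. z i)) $ i\<bar>)"
      unfolding dist_norm by (rule norm_le_l1_cart)
    also have "\<dots> < (\<Sum>i\<in>(UNIV :: 'p set). e)"
    proof (intro sum_strict_mono)
      fix i
      have "c $ i - e < z i \<and> z i < c $ i + e"
        using z by (auto simp: B_def)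
      then show "\<bar>(c - (\<chi> i. z i)) $ i\<bar> < e"
        by (simp add: abs_less_iff)
    qed auto
    also have "\<dots> = r"
      by (simp add: e_def)
    finally show "z \<in> (\<lambda>z. \<chi> i. z i) -` ball c r"
      by simp
  qed
  then have "emeasure std_normal_PiM B \<le> emeasure std_normal_PiM ((\<lambda>z. \<chi> i. z i) -` ball c r \<inter> space std_normal_PiM)"
    by (intro emeasure_mono measurable_sets[OF measurable_vec_lambda_std_normal_PiM]) (auto simp: space_PiM)
  also have "\<dots> = emeasure std_gaussian (ball c r)"
    unfolding std_gaussian_def by (rule emeasure_distr[symmetric]) auto
  finally have B_le: "emeasure std_normal_PiM B \<le> emeasure std_gaussian (ball c r)" .
  have B_eq: "emeasure std_normal_PiM B = (\<Prod>i\<in>UNIV. emeasure std_normal_measure {c $ i - e <..< c $ i + e})"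
  proof -
    interpret product_prob_space "\<lambda>_::'p. std_normal_measure"
      by (intro product_prob_spaceI prob_space_std_normal_measure)
    show ?thesis
      unfolding B_def by (rule emeasure_PiM) auto
  qed
  have "emeasure std_normal_measure {a <..< b} \<noteq> 0" if "a < b" for a b
  proof -
    have "{a <..< b} \<notin> null_sets lborel"
      using that by (simp add: null_sets_def)
    then have "{a <..< b} \<notin> null_sets std_normal_measure"
      using null_sets_std_normal_measure by blast
    then show ?thesis
      by (auto simp: null_sets_def sets_std_normal_measure)
  qed
  then show ?thesis
    using e B_le B_eq by (auto simp: zero_less_iff_neq_zero prod_zero_iff)
qed

lemma prob_space_gaussian_matrix: "prob_space (gaussian_matrix m)"
  unfolding gaussian_matrix_def by (intro prob_space_PiM prob_space_std_normal_measure)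

text \<open>Points of the product space are extensional, so entries outside the index set are the
  constant undefined; this lets the measurability prover ignore the bound j < m.\<close>

lemma measurable_gaussian_matrix_entry [measurable]:
  "(\<lambda>G. G ij) \<in> borel_measurable (gaussian_matrix m)"
proof (cases "ij \<in> UNIV \<times> {..<m}")
  case True
  then show ?thesis
    unfolding gaussian_matrix_def by measurable
next
  case False
  then obtain i j where "ij = (i, j)" "m \<le> j"
    by (cases ij) auto
  then show ?thesis
    unfolding gaussian_matrix_def
    by (subst measurable_cong[where g = "\<lambda>_. undefined"]) (auto simp: space_PiM PiE_def extensional_def)
qed

lemma measurable_gcol [measurable]: "(\<lambda>G. gcol G j) \<in> borel_measurable (gaussian_matrix m)"
  unfolding gcol_def by (rule borel_measurable_vec_lambda) measurable

lemma distr_gcol_gaussian_matrix: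
  assumes "j < m"
  shows "distr (gaussian_matrix m) borel (\<lambda>G. gcol G j) = (std_gaussian :: (real ^ 'p::finite) measure)"
proof -
  let ?col = "\<lambda>G :: 'p \<times> nat \<Rightarrow> real. \<lambda>i\<in>UNIV. G (i, j)"
  have [measurable]: "?col \<in> measurable (gaussian_matrix m) std_normal_PiM"
    by measurable
  have col_distr: "distr (gaussian_matrix m) std_normal_PiM ?col = std_normal_PiM"
    unfolding gaussian_matrix_def using assms
    by (intro distr_PiM_reindex) (auto simp: prob_space_std_normal_measure inj_on_def)
  have "(\<lambda>G. gcol G j) = (\<lambda>z. \<chi> i. z i) \<circ> ?col"
    by (simp add: gcol_def fun_eq_iff)
  then have "distr (gaussian_matrix m) borel (\<lambda>G. gcol G j)
      = distr (distr (gaussian_matrix m) std_normal_PiM ?col) borel (\<lambda>z. \<chi> i. z i)"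
    by (simp add: distr_distr)
  then show ?thesis
    by (simp add: col_distr std_gaussian_def)
qed

lemma indep_vars_gaussian_matrix_entries:
  assumes "m > 0"
  shows "prob_space.indep_vars (gaussian_matrix m) (\<lambda>_. std_normal_measure) (\<lambda>ij G. G ij)
    (UNIV \<times> {..<m} :: ('p::finite \<times> nat) set)"
proof -
  let ?I = "UNIV \<times> {..<m} :: ('p \<times> nat) set"
  interpret prob_space "gaussian_matrix m :: ('p \<times> nat \<Rightarrow> real) measure"
    by (rule prob_space_gaussian_matrix)
  have "distr (gaussian_matrix m) (PiM ?I (\<lambda>_. std_normal_measure)) (\<lambda>G. \<lambda>ij\<in>?I. G ij) = gaussian_matrix m"
    unfolding gaussian_matrix_def
    by (subst distr_cong[where g = "\<lambda>x. x", OF refl refl]) (auto simp: space_PiM PiE_def extensional_restrict)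
  also have "\<dots> = PiM ?I (\<lambda>ij. distr (gaussian_matrix m) std_normal_measure (\<lambda>G. G ij))"
    unfolding gaussian_matrix_def
    by (rule PiM_cong) (auto intro!: distr_PiM_component[OF prob_space_std_normal_measure, symmetric])
  finally show ?thesis
    using assms by (subst indep_vars_iff_distr_eq_PiM') (auto simp: gaussian_matrix_def)
qed

lemma indep_vars_gcol:
  assumes "m > 0"
  shows "prob_space.indep_vars (gaussian_matrix m) (\<lambda>_. borel) (\<lambda>j G. gcol G j :: real ^ 'p::finite) {..<m}"
proof -
  interpret prob_space "gaussian_matrix m :: ('p \<times> nat \<Rightarrow> real) measure"
    by (rule prob_space_gaussian_matrix)
  let ?K = "\<lambda>j. UNIV \<times> {j} :: ('p \<times> nat) set"
  have "indep_vars (\<lambda>j. PiM (?K j) (\<lambda>_. std_normal_measure)) (\<lambda>j G. restrict G (?K j)) {..<m}"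
    by (rule indep_vars_restrict[OF indep_vars_gaussian_matrix_entries[OF assms]])
      (auto simp: disjoint_family_on_def)
  moreover have "(\<lambda>G. \<chi> i. G (i, j)) \<in> measurable (PiM (?K j) (\<lambda>_. std_normal_measure)) borel" for j
    using measurable_component_singleton[of _ "?K j" "\<lambda>_. std_normal_measure"]
    by (intro borel_measurable_vec_lambda) (simp add: measurable_cong_sets[OF refl sets_std_normal_measure])
  ultimately have "indep_vars (\<lambda>_. borel) (\<lambda>j G. \<chi> i. restrict G (?K j) (i, j)) {..<m}"
    by (rule indep_vars_compose2)
  then show ?thesis
    by (simp add: gcol_def)
qed

lemma measure_gaussian_matrix_all_gcol:
  assumes "A \<in> sets borel"
  shows "measure (gaussian_matrix m) {G \<in> space (gaussian_matrix m). \<forall>j<m. gcol G j \<in> A}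
    = measure (std_gaussian :: (real ^ 'p::finite) measure) A ^ m"
proof (cases "m = 0")
  case True
  then show ?thesis
    using prob_space.prob_space[OF prob_space_gaussian_matrix] by simp
next
  case False
  interpret prob_space "gaussian_matrix m :: ('p \<times> nat \<Rightarrow> real) measure"
    by (rule prob_space_gaussian_matrix)
  have "{G \<in> space (gaussian_matrix m). \<forall>j<m. gcol G j \<in> A}
      = (\<Inter>j\<in>{..<m}. (\<lambda>G. gcol G j) -` A \<inter> space (gaussian_matrix m))"
    using False by auto
  also have "prob \<dots> = (\<Prod>j\<in>{..<m}. prob ((\<lambda>G. gcol G j) -` A \<inter> space (gaussian_matrix m)))"
    using False assms by (intro indep_varsD_finite[OF indep_vars_gcol]) auto
  also have "\<dots> = (\<Prod>j\<in>{..<m}. measure (std_gaussian :: (real ^ 'p) measure) A)"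
    using assms by (intro prod.cong refl) (simp flip: distr_gcol_gaussian_matrix add: measure_distr)
  finally show ?thesis
    by simp
qed

lemma solid_angle_pos:
  assumes "K \<in> sets borel" and "interior K \<noteq> {}"
  shows "solid_angle K > 0"
proof -
  interpret prob_space "std_gaussian :: (real ^ 'p::finite) measure"
    by (rule prob_space_std_gaussian)
  obtain c r where "r > 0" "ball c r \<subseteq> K"
    using assms(2) by (metis ex_in_conv mem_interior)
  then have "0 < measure std_gaussian (ball c r)"
    using emeasure_std_gaussian_ball_pos[of r c] by (simp add: emeasure_eq_measure)
  also have "\<dots> \<le> measure std_gaussian K"
    using \<open>ball c r \<subseteq> K\<close> assms(1) by (intro finite_measure_mono) auto
  finally show ?thesis
    by (simp add: solid_angle_def)
qed

lemma closed_normal_cone: "closed (normal_cone C h)"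
proof -
  have "normal_cone C h = (\<Inter>y\<in>C. {w. (y - h) \<bullet> w \<le> 0})"
    by (auto simp: normal_cone_def inner_commute)
  then show ?thesis
    by (simp add: closed_INT closed_halfspace_le)
qed

lemma normal_cone_convex_hull:
  "normal_cone (convex hull S) h = {w. \<forall>y\<in>S. w \<bullet> (y - h) \<le> 0}"
proof (intro equalityI subsetI)
  fix w assume "w \<in> {w. \<forall>y\<in>S. w \<bullet> (y - h) \<le> 0}"
  then have "S \<subseteq> {y. w \<bullet> y \<le> w \<bullet> h}"
    by (auto simp: inner_diff_right)
  then have "convex hull S \<subseteq> {y. w \<bullet> y \<le> w \<bullet> h}"
    by (simp add: convex_halfspace_le hull_minimal)
  then show "w \<in> normal_cone (convex hull S) h"
    by (auto simp: normal_cone_def inner_diff_right)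
qed (auto simp: normal_cone_def hull_inc)

text \<open>Strictly separating h from the convex hull of the other points yields an open set of
  directions w with w \<bullet> (y - h) < 0 for all those points y.\<close>

lemma interior_normal_cone_extreme_point:
  fixes S :: "'a::euclidean_space set"
  assumes "finite S" and "h extreme_point_of (convex hull S)"
  shows "interior (normal_cone (convex hull S) h) \<noteq> {}"
proof -
  have "convex (convex hull S - {h})"
    using assms(2) by (simp add: extreme_point_of_stillconvex)
  then have "convex hull (S - {h}) \<subseteq> convex hull S - {h}"
    by (intro hull_minimal) (auto intro: hull_inc)
  then have "h \<notin> convex hull (S - {h})"
    by blast
  moreover have "closed (convex hull (S - {h}))"
    using assms(1) by (simp add: compact_imp_closed finite_imp_compact_convex_hull)
  ultimately obtain a b where ab: "a \<bullet> h < b" "\<And>y. y \<in> convex hull (S - {h}) \<Longrightarrow> b < a \<bullet> y"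
    using separating_hyperplane_closed_point[OF convex_convex_hull] by metis
  define U where "U = (\<Inter>y\<in>S - {h}. {w. (y - h) \<bullet> w < 0})"
  have "open U"
    unfolding U_def using assms(1) by (intro open_INT) (auto simp: open_halfspace_lt)
  moreover have "U \<subseteq> normal_cone (convex hull S) h"
    by (force simp: U_def normal_cone_convex_hull inner_commute less_imp_le)
  moreover have "- a \<in> U"
  proof -
    have "(y - h) \<bullet> (- a) < 0" if "y \<in> S - {h}" for y
      using ab(1) ab(2)[OF hull_inc[OF that]] by (simp add: inner_diff_left inner_diff_right inner_commute)
    then show ?thesis
      by (simp add: U_def)
  qed
  ultimately show ?thesis
    using interior_maximal by blast
qed

lemma solid_angle_normal_cone_extreme_point_pos:
  fixes S :: "(real ^ 'p::finite) set"
  assumes "finite S" and "h extreme_point_of (convex hull S)"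
  shows "0 < solid_angle (normal_cone (convex hull S) h)"
  using assms by (intro solid_angle_pos interior_normal_cone_extreme_point borel_closed closed_normal_cone)

lemma measure_normal_cone_Un_uminus:
  fixes C :: "(real ^ 'p::finite) set"
  assumes "y \<in> C" and "y \<noteq> h"
  shows "measure std_gaussian (normal_cone C h \<union> uminus -` normal_cone C h) = 2 * solid_angle (normal_cone C h)"
proof -
  interpret prob_space "std_gaussian :: (real ^ 'p) measure"
    by (rule prob_space_std_gaussian)
  let ?N = "normal_cone C h"
  have N: "?N \<in> sets borel"
    by (simp add: borel_closed closed_normal_cone)
  have neg_N: "uminus -` ?N \<in> sets borel"
    by (rule measurable_sets_borel[OF _ N]) simp
  have sub: "?N \<inter> uminus -` ?N \<subseteq> {w. w \<bullet> (y - h) = 0}"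
  proof
    fix w assume "w \<in> ?N \<inter> uminus -` ?N"
    then have "w \<bullet> (y - h) \<le> 0" "(- w) \<bullet> (y - h) \<le> 0"
      using assms(1) unfolding normal_cone_def by blast+
    then show "w \<in> {w. w \<bullet> (y - h) = 0}"
      by simp
  qed
  have "?N \<inter> uminus -` ?N \<in> null_sets std_gaussian"
  proof (rule null_sets_subset[OF _ _ sub])
    show "{w. w \<bullet> (y - h) = 0} \<in> null_sets std_gaussian"
      using assms(2) by (intro null_sets_std_gaussian_hyperplane) simp
    show "?N \<inter> uminus -` ?N \<in> sets std_gaussian"
      using N neg_N by (simp add: sets_std_gaussian)
  qed
  then have "measure std_gaussian (?N \<inter> uminus -` ?N) = 0"
    by (rule measure_eq_0_null_sets)
  moreover have "measure std_gaussian (?N \<union> uminus -` ?N)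
      = measure std_gaussian ?N + measure std_gaussian (uminus -` ?N) - measure std_gaussian (?N \<inter> uminus -` ?N)"
    using N neg_N by (intro measure_Un3) (simp_all add: fmeasurable_eq_sets sets_std_gaussian)
  ultimately show ?thesis
    using measure_std_gaussian_vimage_uminus[OF N] by (simp add: solid_angle_def)
qed

lemma measure_compl_normal_cone_Un_uminus_le:
  fixes C :: "(real ^ 'p::finite) set"
  shows "measure std_gaussian (- (normal_cone C h \<union> uminus -` normal_cone C h))
    \<le> max 0 (1 - 2 * solid_angle (normal_cone C h))"
proof (cases "\<exists>y\<in>C. y \<noteq> h")
  case True
  then obtain y where y: "y \<in> C" "y \<noteq> h"
    by blast
  interpret prob_space "std_gaussian :: (real ^ 'p) measure"
    by (rule prob_space_std_gaussian)
  have N: "normal_cone C h \<in> sets borel"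
    by (simp add: borel_closed closed_normal_cone)
  moreover have "uminus -` normal_cone C h \<in> sets borel"
    by (rule measurable_sets_borel[OF _ N]) simp
  ultimately show ?thesis
    using prob_compl[of "normal_cone C h \<union> uminus -` normal_cone C h"]
    by (simp add: Compl_eq_Diff_UNIV sets_std_gaussian measure_normal_cone_Un_uminus[OF y])
next
  case False
  then have "normal_cone C h = UNIV"
    by (auto simp: normal_cone_def)
  then show ?thesis
    by simp
qed

lemma in_returned_rows_if_gcol_in_normal_cone:
  assumes "r < n" and "j < m"
    and "gcol G j \<in> normal_cone (convex hull (x ` {..<n})) (x r) \<union> uminus -` normal_cone (convex hull (x ` {..<n})) (x r)"
  shows "x r \<in> returned_rows n m x G"
proof -
  have normal_iff: "w \<in> normal_cone (convex hull (x ` {..<n})) (x r) \<longleftrightarrow> (\<forall>s<n. w \<bullet> x s \<le> w \<bullet> x r)" for w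
    by (auto simp: normal_cone_convex_hull inner_diff_right)
  have "(\<forall>s<n. XG_entry x G s j \<le> XG_entry x G r j) \<or> (\<forall>s<n. XG_entry x G r j \<le> XG_entry x G s j)"
    using assms(3) by (simp add: normal_iff XG_entry_def inner_commute)
  then have "r \<in> I_max n m x G \<union> I_min n m x G"
    using assms(1,2) unfolding I_max_def I_min_def by blast
  then show ?thesis
    by (simp add: returned_rows_def)
qed

lemma pred_in_returned_rows [measurable]:
  "Measurable.pred (gaussian_matrix m) (\<lambda>G. h \<in> returned_rows n m x G)"
proof -
  have "h \<in> returned_rows n m x G \<longleftrightarrow> (\<exists>r<n. x r = h \<and> (\<exists>j<m.
      (\<forall>s<n. XG_entry x G s j \<le> XG_entry x G r j) \<or> (\<forall>s<n. XG_entry x G r j \<le> XG_entry x G s j)))" for G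
    unfolding returned_rows_def I_max_def I_min_def by blast
  then show ?thesis
    unfolding XG_entry_def by simp measurable
qed

lemma measure_not_in_returned_rows_le:
  fixes x :: "nat \<Rightarrow> real ^ 'p::finite" and n m :: nat
  defines "P \<equiv> convex hull (x ` {..<n})"
  assumes "h \<in> x ` {..<n}" and "1 - 2 * solid_angle (normal_cone P h) \<le> b" and "0 \<le> b"
  shows "measure (gaussian_matrix m) {G \<in> space (gaussian_matrix m). h \<notin> returned_rows n m x G} \<le> b ^ m"
proof -
  interpret prob_space "gaussian_matrix m :: ('p \<times> nat \<Rightarrow> real) measure"
    by (rule prob_space_gaussian_matrix)
  obtain r where r: "r < n" "h = x r"
    using assms(2) by blast
  define U where "U = - (normal_cone P h \<union> uminus -` normal_cone P h)"
  have N: "normal_cone P h \<in> sets borel"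
    by (simp add: borel_closed closed_normal_cone)
  moreover have "uminus -` normal_cone P h \<in> sets borel"
    by (rule measurable_sets_borel[OF _ N]) simp
  ultimately have U [measurable]: "U \<in> sets borel"
    unfolding U_def by (metis Compl_eq_Diff_UNIV sets.Un sets.compl_sets space_borel)
  have "{G \<in> space (gaussian_matrix m). h \<notin> returned_rows n m x G}
      \<subseteq> {G \<in> space (gaussian_matrix m). \<forall>j<m. gcol G j \<in> U}"
    using in_returned_rows_if_gcol_in_normal_cone[OF r(1)] r(2) unfolding U_def P_def by blast
  then have "prob {G \<in> space (gaussian_matrix m). h \<notin> returned_rows n m x G} \<le> measure std_gaussian U ^ m"
    unfolding measure_gaussian_matrix_all_gcol[OF U, symmetric] by (rule finite_measure_mono) measurable
  also have "\<dots> \<le> b ^ m"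
    using measure_compl_normal_cone_Un_uminus_le[of P h] assms(3,4)
    unfolding U_def by (intro power_mono measure_nonneg) simp
  finally show ?thesis .
qed

lemma measure_subset_returned_rows_ge:
  assumes "finite H"
    and "\<And>h. h \<in> H \<Longrightarrow> measure (gaussian_matrix m) {G \<in> space (gaussian_matrix m). h \<notin> returned_rows n m x G} \<le> b"
  shows "1 - real (card H) * b \<le> measure (gaussian_matrix m) {G \<in> space (gaussian_matrix m). H \<subseteq> returned_rows n m x G}"
proof -
  interpret prob_space "gaussian_matrix m :: ('p::finite \<times> nat \<Rightarrow> real) measure"
    by (rule prob_space_gaussian_matrix)
  let ?miss = "\<lambda>h. {G \<in> space (gaussian_matrix m). h \<notin> returned_rows n m x G}"
  let ?good = "{G \<in> space (gaussian_matrix m). H \<subseteq> returned_rows n m x G}"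
  have [simp]: "?miss h \<in> events" for h
    by measurable
  have "space (gaussian_matrix m) - ?good = (\<Union>h\<in>H. ?miss h)"
    by blast
  then have "prob (space (gaussian_matrix m) - ?good) \<le> (\<Sum>h\<in>H. prob (?miss h))"
    using assms(1) by (simp add: finite_measure_subadditive_finite image_subset_iff)
  also have "\<dots> \<le> real (card H) * b"
    using assms(2) by (rule sum_bounded_above)
  finally have "prob (space (gaussian_matrix m) - ?good) \<le> real (card H) * b" .
  moreover have "?good \<in> events"
    using assms(1) unfolding subset_eq by measurable
  ultimately show ?thesis
    by (simp add: prob_compl)
qed

lemma mult_power_less_if_ln_less:
  fixes \<mu> \<delta> k :: real
  assumes "0 < \<mu>" and "\<mu> < 1" and "0 < k" and "0 < \<delta>"
    and "ln (k / \<delta>) / ln (1 / \<mu>) < real m"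
  shows "k * \<mu> ^ m < \<delta>"
proof -
  have "0 < ln (1 / \<mu>)"
    using assms(1,2) by simp
  then have "ln (k / \<delta>) < ln ((1 / \<mu>) ^ m)"
    using assms(1,5) by (simp add: ln_realpow pos_divide_less_eq mult.commute)
  then have "k / \<delta> < (1 / \<mu>) ^ m"
    using assms(1,3,4) by simp
  then show ?thesis
    using assms(1,4) by (simp add: field_simps power_one_over)
qed

lemma extreme_point_exists_convex_hull:
  fixes S :: "'a::euclidean_space set"
  assumes "finite S" and "S \<noteq> {}"
  obtains h where "h extreme_point_of (convex hull S)"
proof (rule extreme_point_exists_convex)
  show "compact (convex hull S)"
    using assms(1) by (rule finite_imp_compact_convex_hull)
qed (use assms(2) in auto)

theorem corollary1:
  fixes x :: "nat \<Rightarrow> real ^ 'p::finite" and n m :: nat and \<delta> :: real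
  defines "P \<equiv> convex hull (x ` {..<n})"
  defines "H \<equiv> {h. h extreme_point_of P}"
  defines "k \<equiv> card H"
  defines "\<mu> \<equiv> Max ((\<lambda>h. 1 - 2 * solid_angle (normal_cone P h)) ` H)"
  defines "\<kappa> \<equiv> 1 / (real k * ln (1 / \<mu>))"
  assumes "n \<ge> 1"
    and "0 < \<delta>" and "\<delta> < 1"
    and "0 < \<mu>"
    and "real m > \<kappa> * real k * ln (real k / \<delta>)"
  shows "measure (gaussian_matrix m) {G \<in> space (gaussian_matrix m). H \<subseteq> returned_rows n m x G}
           \<ge> 1 - \<delta>"
proof -
  have H_sub: "H \<subseteq> x ` {..<n}"
    unfolding H_def P_def by (rule extreme_points_of_convex_hull)
  then have H_fin: "finite H"
    by (rule finite_subset) simp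
  have "H \<noteq> {}"
    using extreme_point_exists_convex_hull[of "x ` {..<n}"] assms(6)
    unfolding H_def P_def by (auto simp: lessThan_empty_iff)
  then have k: "0 < k"
    using H_fin by (simp add: k_def card_gt_0_iff)
  obtain h where "h \<in> H" "\<mu> = 1 - 2 * solid_angle (normal_cone P h)"
    using Max_in[of "(\<lambda>h. 1 - 2 * solid_angle (normal_cone P h)) ` H"] H_fin \<open>H \<noteq> {}\<close>
    unfolding \<mu>_def by blast
  then have "\<mu> < 1"
    using solid_angle_normal_cone_extreme_point_pos[of "x ` {..<n}" h] by (simp add: H_def P_def)
  have \<mu>_ge: "1 - 2 * solid_angle (normal_cone P h) \<le> \<mu>" if "h \<in> H" for h
    unfolding \<mu>_def using H_fin that by (intro Max_ge) auto
  have miss: "measure (gaussian_matrix m) {G \<in> space (gaussian_matrix m). h \<notin> returned_rows n m x G} \<le> \<mu> ^ m"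
    if "h \<in> H" for h
    using measure_not_in_returned_rows_le[OF subsetD[OF H_sub that] \<mu>_ge[OF that, unfolded P_def]]
      assms(9) by simp
  have "real k * \<mu> ^ m < \<delta>"
    using assms(7,9,10) \<open>\<mu> < 1\<close> k
    by (intro mult_power_less_if_ln_less) (simp_all add: \<kappa>_def)
  then show ?thesis
    using measure_subset_returned_rows_ge[OF H_fin miss] by (simp add: k_def)
qed

end
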